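(* Let $p,q\ge 3$ be relatively prime odd integers. Then $$p\sum_{n=1}^{q-1}\frac{\cot(\pi np/q)\cot(\pi n/q)}{\cos^2(\pi n/q)}+q\sum_{n=1}^{p-1}\frac{\cot(\pi nq/p)\cot(\pi n/p)}{\cos^2(\pi n/p)}=\frac{1}{3}\left(p^2+q^2-2\right).$$ *)

theory Defs
  imports Complex_Main
begin

end

theory Submission
  imports Defs "HOL-Complex_Analysis.Complex_Analysis"
begin

(*
  The rational function
    R(w) = (w^p + 1)(w^q + 1) / ((w^p - 1)(w^q - 1)(w^2 - 1))
  decays like |w|^-2, so the sum of its residues vanishes.  At a nontrivial p-th root of unity
  w = e^(2 pi i n/p) the residue is -cot(pi n q/p) cot(pi n/p) / (2p cos^2(pi n/p)), and
  symmetrically at the nontrivial q-th roots (these poles are simple and distinct because p and q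
  are coprime and odd); at -1 the residue vanishes because the numerator does, and at the triple
  pole 1 it is (p^2 + q^2 - 2)/(6pq).  Multiplying the vanishing residue sum by -2pq gives the
  identity.
*)

lemma root_of_unity_coprime_eq_1:
  fixes w :: complex
  assumes "w ^ a = 1" "w ^ b = 1" "coprime a b"
  shows "w = 1"
proof (cases "a = 0")
  case True
  then show ?thesis using assms by simp
next
  case False
  then obtain x y where "a * x = b * y + gcd a b" using bezout_nat by blast
  then have "w ^ (a * x) = w ^ (b * y) * w" using assms(3) by (simp add: power_add)
  then show ?thesis using assms by (simp add: power_mult)
qed

lemma sum_residues_eq_0_of_decay:
  fixes f :: "complex \<Rightarrow> complex"
  assumes S: "finite S" and holo: "f holomorphic_on - S"
    and decay: "\<And>w. norm w \<ge> R \<Longrightarrow> norm (f w) \<le> C / norm w ^ 2"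
  shows "(\<Sum>z\<in>S. residue f z) = 0"
proof -
  define \<Sigma> where "\<Sigma> = (\<Sum>z\<in>S. residue f z)"
  define r0 where "r0 = max (max R 1) (Max (insert 0 (norm ` S)) + 1)"
  have inside: "norm z < r" if "z \<in> S" "r \<ge> r0" for z r
  proof -
    have "norm z \<le> Max (insert 0 (norm ` S))" using S that(1) by (intro Max_ge) auto
    then show ?thesis using that(2) unfolding r0_def by linarith
  qed
  have bound: "norm \<Sigma> \<le> C / r" if r: "r \<ge> r0" for r
  proof -
    have r1: "r \<ge> 1" and rR: "r \<ge> R" using r unfolding r0_def by auto
    have pimg: "path_image (circlepath 0 r) \<subseteq> - S"
      using inside r by (fastforce simp: sphere_def dist_norm)
    have "contour_integral (circlepath 0 r) f
          = 2*pi*\<i>*(\<Sum>z\<in>S. winding_number (circlepath 0 r) z * residue f z)"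
      using pimg by (intro Residue_theorem[of UNIV, OF open_UNIV connected_UNIV S])
        (auto simp: Compl_eq_Diff_UNIV[symmetric] holo)
    also have "(\<Sum>z\<in>S. winding_number (circlepath 0 r) z * residue f z) = \<Sigma>"
      unfolding \<Sigma>_def using inside r by (intro sum.cong refl) (auto simp: winding_number_circlepath)
    finally have "(f has_contour_integral 2*pi*\<i>*\<Sigma>) (circlepath 0 r)"
      using contour_integrable_holomorphic_simple[of f "- S", OF holo _ _ pimg] S
      by (metis finite_imp_closed open_Compl valid_path_circlepath has_contour_integral_integral)
    then have "norm (2*pi*\<i>*\<Sigma>) \<le> C / r^2 * (2*pi*r)"
    proof (rule has_contour_integral_bound_circlepath)
      show "0 \<le> C / r^2"
        using decay[of "of_real r"] r1 rR by (intro order_trans[OF norm_ge_zero]) simp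
    qed (use r1 rR decay in auto)
    then show ?thesis using r1 by (simp add: norm_mult power2_eq_square field_simps)
  qed
  have "((\<lambda>r. C / r) \<longlongrightarrow> 0) at_top"
    by (intro tendsto_divide_0[OF tendsto_const] filterlim_at_top_imp_at_infinity filterlim_ident)
  moreover have "eventually (\<lambda>r. norm \<Sigma> \<le> C / r) at_top"
    using bound eventually_at_top_linorder by blast
  ultimately have "norm \<Sigma> \<le> 0" by (intro tendsto_le[OF trivial_limit_at_top_linorder _ tendsto_const])
  then show ?thesis unfolding \<Sigma>_def by simp
qed

lemma residue_div_power_diff_one:
  fixes F :: "complex \<Rightarrow> complex"
  assumes "open S" "connected S" "\<omega> \<in> S" "F holomorphic_on S" "F \<omega> \<noteq> 0"
    and "\<omega> ^ n = 1" "n > 0"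
  shows "residue (\<lambda>w. F w / (w ^ n - 1)) \<omega> = \<omega> * F \<omega> / of_nat n"
proof -
  have \<omega>: "\<omega> \<noteq> 0" using assms(6,7) by (auto simp: power_0_left)
  have "\<omega> * \<omega> ^ (n - 1) = 1" using assms(6,7) by (cases n) auto
  then have "of_nat n * \<omega> ^ (n - 1) = of_nat n / \<omega>" using \<omega> by (simp add: field_simps)
  moreover have "((\<lambda>w. w ^ n - 1) has_field_derivative of_nat n * \<omega> ^ (n - 1)) (at \<omega>)"
    by (auto intro!: derivative_eq_intros)
  ultimately have "residue (\<lambda>w. F w / (w ^ n - 1)) \<omega> = F \<omega> / (of_nat n / \<omega>)"
    using assms \<omega> by (intro residue_simple_pole_deriv[where s = S]) (auto intro!: holomorphic_intros)
  then show ?thesis by simp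
qed

lemma higher_deriv_power_eq_prod:
  "(deriv ^^ k) (\<lambda>w::complex. w ^ m) = (\<lambda>w. (\<Prod>j<k. of_nat m - of_nat j) * w ^ (m - k))"
proof (induction k)
  case 0
  then show ?case by simp
next
  case (Suc k)
  show ?case
  proof (cases "k < m")
    case True
    then show ?thesis using Suc
      by (auto intro!: ext DERIV_imp_deriv derivative_eq_intros simp: of_nat_diff Suc_diff_Suc)
  next
    case False
    then have "(\<Prod>j<Suc k. of_nat m - of_nat j :: complex) = 0"
      by (intro prod_zero) (auto intro!: bexI[of _ m])
    moreover have "(deriv ^^ Suc k) (\<lambda>w::complex. w ^ m) = (\<lambda>w. 0)"
      using Suc False by simp
    ultimately show ?thesis by (simp only: mult_zero_left)
  qed
qed

lemma higher_deriv_mult_eq_at: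
  assumes "open A" "z \<in> A" "f holomorphic_on A" "h analytic_on {z}"
    and "\<And>w. w \<in> A \<Longrightarrow> h w * f w = g w"
  shows "(\<Sum>i=0..k. of_nat (k choose i) * (deriv^^i) h z * (deriv^^(k-i)) f z) = (deriv^^k) g z"
proof -
  have "f analytic_on {z}" using assms(1-3) analytic_at by blast
  then have "(deriv^^k) (\<lambda>w. h w * f w) z = (\<Sum>i=0..k. of_nat (k choose i) * (deriv^^i) h z * (deriv^^(k-i)) f z)"
    using assms(4) by (intro higher_deriv_mult_at)
  moreover have "(deriv^^k) (\<lambda>w. h w * f w) z = (deriv^^k) g z"
    using eventually_nhds_in_open[OF assms(1,2)] assms(5) by (intro higher_deriv_cong_ev) (auto elim: eventually_mono)
  ultimately show ?thesis by simp
qed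

lemma cis_double_add_one: "cis (2*x) + 1 = 2 * complex_of_real (cos x) * cis x"
  by (simp add: complex_eq_iff cos_double sin_double power2_eq_square)
     (smt (verit) sin_cos_squared_add2 power2_eq_square)

lemma cis_double_diff_one: "cis (2*x) - 1 = 2 * \<i> * complex_of_real (sin x) * cis x"
  by (simp add: complex_eq_iff cos_double sin_double power2_eq_square)
     (smt (verit) sin_cos_squared_add2 power2_eq_square)

definition cot_kernel :: "nat \<Rightarrow> nat \<Rightarrow> complex \<Rightarrow> complex" where
  "cot_kernel a b w = (w^a + 1) * (w^b + 1) / ((w^a - 1) * (w^b - 1) * (w^2 - 1))"

lemma cot_kernel_commute: "cot_kernel a b = cot_kernel b a"
  by (rule ext) (simp add: cot_kernel_def mult_ac)

lemma norm_power_add_one_div_power_diff_one_le: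
  fixes w :: complex
  assumes "norm w \<ge> 2" "n \<ge> 1"
  shows "norm ((w^n + 1) / (w^n - 1)) \<le> 3"
proof -
  define t where "t = norm w ^ n"
  have "norm w \<le> t" unfolding t_def using assms by (intro self_le_power) auto
  then have t: "t \<ge> 2" using assms(1) by linarith
  have "norm ((w^n + 1) / (w^n - 1)) \<le> (t + 1) / (t - 1)"
    unfolding norm_divide t_def using t norm_triangle_ineq[of "w^n" 1] norm_triangle_ineq2[of "w^n" 1]
    by (intro frac_le) (auto simp: norm_power t_def)
  also have "\<dots> \<le> 3" using t by (simp add: field_simps)
  finally show ?thesis .
qed

lemma norm_cot_kernel_le:
  fixes w :: complex
  assumes "norm w \<ge> 2" "a \<ge> 1" "b \<ge> 1"
  shows "norm (cot_kernel a b w) \<le> 18 / norm w ^ 2"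
proof -
  have "4 \<le> norm w ^ 2" using power_mono[OF assms(1), of 2] by simp
  moreover have "norm w ^ 2 - 1 \<le> norm (w^2 - 1)"
    using norm_triangle_ineq2[of "w^2" 1] by (simp add: norm_power)
  ultimately have sq: "norm w ^ 2 / 2 \<le> norm (w^2 - 1)" by linarith
  have "norm (cot_kernel a b w)
      = norm ((w^a + 1) / (w^a - 1)) * norm ((w^b + 1) / (w^b - 1)) / norm (w^2 - 1)"
    by (simp add: cot_kernel_def norm_mult norm_divide)
  also have "\<dots> \<le> 3 * 3 / (norm w ^ 2 / 2)"
    using norm_power_add_one_div_power_diff_one_le[OF assms(1)] assms(2,3) sq \<open>4 \<le> norm w ^ 2\<close>
    by (intro frac_le mult_mono) auto
  finally show ?thesis by simp
qed

lemma sum_residues_cot_kernel: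
  assumes "a \<ge> 1" "b \<ge> 1"
  shows "(\<Sum>z \<in> {w. w^a = 1} \<union> {w. w^b = 1} \<union> {-1}. residue (cot_kernel a b) z) = 0"
proof (rule sum_residues_eq_0_of_decay)
  show "finite ({w::complex. w^a = 1} \<union> {w. w^b = 1} \<union> {-1})"
    using assms by (auto intro: finite_roots_unity)
  show "cot_kernel a b holomorphic_on - ({w. w^a = 1} \<union> {w. w^b = 1} \<union> {-1})"
    unfolding cot_kernel_def by (intro holomorphic_intros) (auto simp: power2_eq_1_iff)
qed (use norm_cot_kernel_le assms in blast)

lemma residue_cot_kernel_root:
  assumes "odd a" "odd b" "coprime a b" "\<omega> ^ a = 1" "\<omega> \<noteq> 1"
  shows "residue (cot_kernel a b) \<omega> = 2 * \<omega> * (\<omega>^b + 1) / (of_nat a * (\<omega>^b - 1) * (\<omega>^2 - 1))"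
proof -
  have a: "a > 0" and b: "b > 0" using assms(1,2) by (auto intro: odd_pos)
  have "\<omega> ^ b \<noteq> 1" using root_of_unity_coprime_eq_1 assms by blast
  moreover have "\<omega> ^ b \<noteq> -1"
  proof
    assume "\<omega> ^ b = -1"
    then have "\<omega> ^ (2 * b) = 1" by (simp add: mult.commute[of 2 b] power_mult)
    moreover have "coprime a (2 * b)" using assms(1,3) by simp
    ultimately show False using root_of_unity_coprime_eq_1 assms(4,5) by blast
  qed
  moreover have "\<omega> ^ 2 \<noteq> 1" using assms(1,4,5) by (auto simp: power2_eq_1_iff)
  ultimately have roots: "\<omega> ^ b \<noteq> 1" "2 * \<omega> ^ b + 2 \<noteq> 0" "\<omega> ^ 2 \<noteq> 1"
    by (metis add_eq_0_iff2 distrib_left_numeral mult_1_right mult_eq_0_iff zero_neq_numeral)+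
  define T where "T = {w::complex. w^b = 1} \<union> {-1}"
  have "finite T" unfolding T_def using finite_roots_unity[of b] b by auto
  define F where "F w = (w^a + 1) * (w^b + 1) / ((w^b - 1) * (w^2 - 1))" for w :: complex
  have "residue (\<lambda>w. F w / (w^a - 1)) \<omega> = \<omega> * F \<omega> / of_nat a"
  proof (rule residue_div_power_diff_one[where S = "- T"])
    show "open (- T)" using \<open>finite T\<close> by (simp add: finite_imp_closed open_Compl)
    show "connected (- T)"
      using connected_open_delete_finite[of UNIV T] \<open>finite T\<close> by (simp add: Compl_eq_Diff_UNIV connected_UNIV)
    show "F holomorphic_on - T"
      unfolding F_def T_def by (intro holomorphic_intros) (auto simp: power2_eq_1_iff)
  qed (use roots assms a in \<open>auto simp: T_def F_def\<close>)
  moreover have "cot_kernel a b = (\<lambda>w. F w / (w^a - 1))"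
    by (rule ext) (simp add: cot_kernel_def F_def mult_ac)
  ultimately show ?thesis using assms(4) by (simp add: F_def mult_ac)
qed

lemma residue_cot_kernel_minus_one:
  assumes "odd a" "odd b"
  shows "residue (cot_kernel a b) (-1) = 0"
proof -
  define T where "T = {w::complex. w^a = 1} \<union> {w. w^b = 1}"
  have "finite T" unfolding T_def using assms by (auto intro: finite_roots_unity odd_pos)
  define h where "h w = (w^a + 1) * (w^b + 1) / ((w^a - 1) * (w^b - 1) * (w - 1))" for w :: complex
  have "cot_kernel a b = (\<lambda>w. h w / (w - (-1)))"
    by (rule ext) (simp add: cot_kernel_def h_def power2_eq_square algebra_simps)
  moreover have "residue (\<lambda>w. h w / (w - (-1))) (-1) = h (-1)"
    by (rule residue_simple[where s = "- T"])
       (use \<open>finite T\<close> assms in \<open>auto simp: T_def h_def finite_imp_closed open_Compl intro!: holomorphic_intros\<close>)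
  moreover have "h (-1) = 0" unfolding h_def using assms by simp
  ultimately show ?thesis by simp
qed

definition cot_kernel_cofactor :: "nat \<Rightarrow> nat \<Rightarrow> complex \<Rightarrow> complex" where
  "cot_kernel_cofactor a b w = (w^a + 1) * (w^b + 1) / ((w + 1) * (\<Sum>i<a. w^i) * (\<Sum>i<b. w^i))"

lemma cot_kernel_eq_cofactor: "cot_kernel a b w = cot_kernel_cofactor a b w / (w - 1) ^ 3"
proof -
  have "(w^a - 1) * (w^b - 1) * (w^2 - 1) = (w + 1) * (\<Sum>i<a. w^i) * (\<Sum>i<b. w^i) * (w - 1) ^ 3"
    by (simp only: power_diff_1_eq[of w a] power_diff_1_eq[of w b]) (simp add: power2_eq_square power3_eq_cube algebra_simps)
  then show ?thesis by (simp add: cot_kernel_def cot_kernel_cofactor_def)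
qed

lemma cot_kernel_cofactor_holomorphic:
  assumes "a > 0" "b > 0"
  obtains A where "open A" "1 \<in> A" "cot_kernel_cofactor a b holomorphic_on A"
    and "\<And>w. w \<in> A \<Longrightarrow> (w + 1) * (\<Sum>i<a. w^i) * (\<Sum>i<b. w^i) \<noteq> 0"
proof
  let ?A = "{w::complex. (w + 1) * (\<Sum>i<a. w^i) * (\<Sum>i<b. w^i) \<noteq> 0}"
  show "open ?A" by (intro open_Collect_neq continuous_intros)
  show "1 \<in> ?A" using assms by simp
  show "cot_kernel_cofactor a b holomorphic_on ?A"
    unfolding cot_kernel_cofactor_def by (intro holomorphic_intros) auto
  show "\<And>w. w \<in> ?A \<Longrightarrow> (w + 1) * (\<Sum>i<a. w^i) * (\<Sum>i<b. w^i) \<noteq> 0" by simp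
qed

lemma residue_cot_kernel_one_eq:
  assumes "a > 0" "b > 0"
  shows "residue (cot_kernel a b) 1 = deriv (deriv (cot_kernel_cofactor a b)) 1 / 2"
proof -
  obtain A where "open A" "1 \<in> A" "cot_kernel_cofactor a b holomorphic_on A"
    using cot_kernel_cofactor_holomorphic[OF assms] by metis
  then have "residue (\<lambda>w. cot_kernel_cofactor a b w / (w - 1) ^ Suc 2) 1
      = (deriv ^^ 2) (cot_kernel_cofactor a b) 1 / fact 2"
    by (rule residue_holomorphic_over_power)
  then show ?thesis by (simp add: cot_kernel_eq_cofactor[abs_def] eval_nat_numeral)
qed

lemma cot_kernel_cofactor_mult_eq:
  assumes "(w + 1) * (\<Sum>i<a. w^i) * (\<Sum>i<b. w^i) \<noteq> 0"
  shows "(w^a - 1) * (w^b - 1) * (w + 1) * cot_kernel_cofactor a b w = (w - 1)^2 * (w^a + 1) * (w^b + 1)"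
proof -
  have "(w^a - 1) * (w^b - 1) * (w + 1) = (w + 1) * (\<Sum>i<a. w^i) * (\<Sum>i<b. w^i) * (w - 1)^2"
    by (simp only: power_diff_1_eq[of w a] power_diff_1_eq[of w b]) (simp add: power2_eq_square algebra_simps)
  then show ?thesis using assms by (simp add: cot_kernel_cofactor_def)
qed

lemma cot_kernel_cofactor_derivative_relations:
  assumes "a > 0" "b > 0"
  defines "f \<equiv> cot_kernel_cofactor a b" and "x \<equiv> of_nat a" and "y \<equiv> of_nat b"
  shows "4*x*y * f 1 = 8"
    and "12*x*y * deriv f 1 + 6*x*y*(x+y-1) * f 1 = 12*(x+y)"
    and "24*x*y * deriv (deriv f) 1 + 24*x*y*(x+y-1) * deriv f 1
         + (8*x^3*y + 12*x^2*y^2 + 8*x*y^3 - 24*x^2*y - 24*x*y^2 + 20*x*y) * f 1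
         = 24*(x^2 + y^2 + x*y - x - y)"
proof -
  obtain A where A: "open A" "1 \<in> A" "f holomorphic_on A"
    and denom: "\<And>w. w \<in> A \<Longrightarrow> (w + 1) * (\<Sum>i<a. w^i) * (\<Sum>i<b. w^i) \<noteq> 0"
    using cot_kernel_cofactor_holomorphic[OF assms(1,2)] unfolding f_def by metis
  \<comment> \<open>H and G are the two sides of \<open>cot_kernel_cofactor_mult_eq\<close> expanded into monomials, so
    their derivatives at 1 are explicit; as H has a double zero at 1, the Leibniz rule for
    \<open>H * f = G\<close> in orders 2, 3, 4 is a triangular system for \<open>f 1\<close>, \<open>f' 1\<close>, \<open>f'' 1\<close>.\<close>
  define H where "H w = w^(a+b+1) + w^(a+b) - w^(a+1) - w^a - w^(b+1) - w^b + w^1 + w^0" for w :: complex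
  define G where "G w = w^(a+b+2) + w^(a+2) + w^(b+2) + w^2 - 2*w^(a+b+1) - 2*w^(a+1) - 2*w^(b+1)
     - 2*w^1 + w^(a+b) + w^a + w^b + w^0" for w :: complex
  have HG: "H w * f w = G w" if "w \<in> A" for w
  proof -
    have "H w = (w^a - 1) * (w^b - 1) * (w + 1)" by (simp add: H_def algebra_simps power_add)
    then have "H w * f w = (w - 1)^2 * (w^a + 1) * (w^b + 1)"
      using cot_kernel_cofactor_mult_eq[OF denom[OF that]] by (simp add: f_def)
    also have "\<dots> = G w" by (simp add: G_def algebra_simps power_add power2_eq_square)
    finally show ?thesis .
  qed
  have "H analytic_on {1}" unfolding H_def[abs_def] by (intro analytic_intros)
  then have Leibniz: "(\<Sum>i=0..k. of_nat (k choose i) * (deriv^^i) H 1 * (deriv^^(k-i)) f 1) = (deriv^^k) G 1" for k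
    by (rule higher_deriv_mult_eq_at[OF A _ HG])
  have Hd: "(deriv^^k) H 1 = (\<Prod>j<k. x+y+1 - of_nat j) + (\<Prod>j<k. x+y - of_nat j) - (\<Prod>j<k. x+1 - of_nat j)
     - (\<Prod>j<k. x - of_nat j) - (\<Prod>j<k. y+1 - of_nat j) - (\<Prod>j<k. y - of_nat j) + (\<Prod>j<k. 1 - of_nat j)
     + (\<Prod>j<k. 0 - of_nat j)" for k
    unfolding H_def[abs_def]
    by (simp only: higher_deriv_add_at higher_deriv_diff_at analytic_intros higher_deriv_power_eq_prod)
       (simp add: x_def y_def ac_simps)
  have Gd: "(deriv^^k) G 1 = (\<Prod>j<k. x+y+2 - of_nat j) + (\<Prod>j<k. x+2 - of_nat j) + (\<Prod>j<k. y+2 - of_nat j)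
     + (\<Prod>j<k. 2 - of_nat j) - 2*(\<Prod>j<k. x+y+1 - of_nat j) - 2*(\<Prod>j<k. x+1 - of_nat j) - 2*(\<Prod>j<k. y+1 - of_nat j)
     - 2*(\<Prod>j<k. 1 - of_nat j) + (\<Prod>j<k. x+y - of_nat j) + (\<Prod>j<k. x - of_nat j) + (\<Prod>j<k. y - of_nat j)
     + (\<Prod>j<k. 0 - of_nat j)" for k
    unfolding G_def[abs_def]
    by (simp only: higher_deriv_add_at higher_deriv_diff_at higher_deriv_cmult' analytic_intros higher_deriv_power_eq_prod)
       (simp add: x_def y_def ac_simps)
  show "4*x*y * f 1 = 8"
    using Leibniz[of 2] by (simp only: Hd Gd) (simp add: eval_nat_numeral algebra_simps)
  show "12*x*y * deriv f 1 + 6*x*y*(x+y-1) * f 1 = 12*(x+y)"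
    using Leibniz[of 3] by (simp only: Hd Gd) (simp add: eval_nat_numeral algebra_simps)
  show "24*x*y * deriv (deriv f) 1 + 24*x*y*(x+y-1) * deriv f 1
         + (8*x^3*y + 12*x^2*y^2 + 8*x*y^3 - 24*x^2*y - 24*x*y^2 + 20*x*y) * f 1
         = 24*(x^2 + y^2 + x*y - x - y)"
    using Leibniz[of 4] by (simp only: Hd Gd) (simp add: eval_nat_numeral algebra_simps)
qed

lemma residue_cot_kernel_one:
  assumes "a > 0" "b > 0"
  shows "residue (cot_kernel a b) 1 = (of_nat a ^ 2 + of_nat b ^ 2 - 2) / (6 * of_nat a * of_nat b)"
proof -
  define f where "f = cot_kernel_cofactor a b"
  define x where "x = (of_nat a :: complex)"
  define y where "y = (of_nat b :: complex)"
  have xy: "x \<noteq> 0" "y \<noteq> 0" using assms by (auto simp: x_def y_def)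
  note rel = cot_kernel_cofactor_derivative_relations[OF assms, folded f_def x_def y_def]
  have f0: "f 1 = 2 / (x*y)" using rel(1) xy by (simp add: field_simps)
  have f1: "deriv f 1 = 1 / (x*y)"
    using rel(2) xy by (simp add: f0 field_simps)
  have "24*x*y * deriv (deriv f) 1 = 24*(x^2 + y^2 + x*y - x - y) - 24*x*y*(x+y-1) * deriv f 1
      - (8*x^3*y + 12*x^2*y^2 + 8*x*y^3 - 24*x^2*y - 24*x*y^2 + 20*x*y) * f 1"
    using rel(3) by (simp add: algebra_simps)
  also have "\<dots> = 8 * (x^2 + y^2 - 2)"
    using xy by (simp add: f0 f1 field_simps power2_eq_square power3_eq_cube)
  finally have "8 * (3*x*y * deriv (deriv f) 1) = 8 * (x^2 + y^2 - 2)" by (simp add: mult_ac)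
  then have "deriv (deriv f) 1 = (x^2 + y^2 - 2) / (3*x*y)"
    using xy by (simp only: mult_cancel_left) (simp add: field_simps)
  then show ?thesis
    using residue_cot_kernel_one_eq[OF assms] xy by (simp add: f_def x_def y_def field_simps)
qed

lemma cot_kernel_residue_term_cis:
  fixes b :: nat and \<theta> :: real
  defines "\<omega> \<equiv> cis (2*\<theta>)"
  shows "2 * \<omega> * (\<omega>^b + 1) / ((\<omega>^b - 1) * (\<omega>^2 - 1))
       = - complex_of_real (cot (real b * \<theta>) * cot \<theta> / (cos \<theta>)^2) / 2"
proof -
  define \<phi> where "\<phi> = real b * \<theta>"
  have \<omega>b: "\<omega>^b = cis (2*\<phi>)" unfolding \<omega>_def \<phi>_def Complex.DeMoivre by (simp add: mult_ac)
  have \<omega>2: "\<omega>^2 = cis (2*(2*\<theta>))" unfolding \<omega>_def Complex.DeMoivre by simp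
  consider "sin (2*\<theta>) = 0" | "sin \<phi> = 0" | "sin (2*\<theta>) \<noteq> 0" "sin \<phi> \<noteq> 0" by blast
  then show ?thesis
  proof cases
    case 1
    then have "\<omega>^2 - 1 = 0" unfolding \<omega>2 cis_double_diff_one by simp
    moreover have "sin \<theta> = 0 \<or> cos \<theta> = 0" using 1 by (simp add: sin_double)
    ultimately show ?thesis by (auto simp: cot_def)
  next
    case 2
    then have "\<omega>^b - 1 = 0" unfolding \<omega>b cis_double_diff_one by simp
    then show ?thesis using 2 by (simp add: \<phi>_def cot_def)
  next
    case 3
    then have "sin \<theta> \<noteq> 0" "cos \<theta> \<noteq> 0" by (auto simp: sin_double)
    have "2 * \<omega> * (\<omega>^b + 1) / ((\<omega>^b - 1) * (\<omega>^2 - 1))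
        = 2 * \<omega> * (2 * complex_of_real (cos \<phi>) * cis \<phi>)
          / ((2 * \<i> * complex_of_real (sin \<phi>) * cis \<phi>) * (2 * \<i> * complex_of_real (sin (2*\<theta>)) * \<omega>))"
      unfolding \<omega>b \<omega>2 cis_double_add_one cis_double_diff_one by (simp add: \<omega>_def)
    also have "\<dots> = - complex_of_real (cos \<phi> / (sin \<phi> * sin (2*\<theta>)))"
      using 3 by (simp add: field_simps \<omega>_def cis_neq_zero)
    also have "cos \<phi> / (sin \<phi> * sin (2*\<theta>)) = cot \<phi> * cot \<theta> / (cos \<theta>)^2 / 2"
      using \<open>sin \<theta> \<noteq> 0\<close> \<open>cos \<theta> \<noteq> 0\<close> by (simp only: sin_double) (simp add: cot_def field_simps power2_eq_square)
    finally show ?thesis by (simp add: \<phi>_def)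
  qed
qed

lemma sum_residues_cot_kernel_nontrivial_roots:
  fixes a b :: nat
  assumes "odd a" "odd b" "coprime a b"
  shows "(\<Sum>z \<in> {z. z^a = 1} - {1}. residue (cot_kernel a b) z)
       = - complex_of_real (\<Sum>n=1..a-1. cot (pi * n * b / a) * cot (pi * n / a) / (cos (pi * n / a))\<^sup>2)
         / (2 * of_nat a)"
proof -
  have a: "a > 0" using assms(1) by (intro odd_pos)
  define T where "T z = 2 * z * (z^b + 1) / ((z^b - 1) * (z^2 - 1))" for z :: complex
  define U where "U = {z::complex. z^a = 1}"
  have "finite U" unfolding U_def using a by (auto intro: finite_roots_unity)
  have "(\<Sum>z \<in> U - {1}. residue (cot_kernel a b) z) = (\<Sum>z \<in> U - {1}. T z) / of_nat a"
    unfolding sum_divide_distrib using assms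
    by (intro sum.cong refl) (auto simp: U_def T_def residue_cot_kernel_root)
  also have "(\<Sum>z \<in> U - {1}. T z) = (\<Sum>z \<in> U. T z)"
    using \<open>finite U\<close> by (intro sum.mono_neutral_left) (auto simp: T_def)
  also have "\<dots> = (\<Sum>k<a. T (cis (2 * pi * k / a)))"
    unfolding U_def by (rule sum.reindex_bij_betw[OF Complex.bij_betw_roots_unity[OF a], symmetric])
  also have "\<dots> = (\<Sum>k=1..a-1. T (cis (2 * pi * k / a)))"
    using a by (intro sum.mono_neutral_right) (auto simp: T_def not_le)
  also have "\<dots> = (\<Sum>k=1..a-1. - complex_of_real (cot (pi * k * b / a) * cot (pi * k / a) / (cos (pi * k / a))\<^sup>2) / 2)"
  proof (intro sum.cong refl)
    fix k :: nat
    have "2 * pi * k / a = 2 * (pi * k / a)" and "b * (pi * k / a) = pi * k * b / a" by simp_all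
    then show "T (cis (2 * pi * k / a)) = - complex_of_real (cot (pi * k * b / a) * cot (pi * k / a) / (cos (pi * k / a))\<^sup>2) / 2"
      unfolding T_def by (simp only: cot_kernel_residue_term_cis)
  qed
  finally show ?thesis unfolding U_def by (simp add: sum_divide_distrib sum_negf mult.assoc)
qed

lemma sum_residues_cot_kernel_split:
  assumes "odd a" "odd b" "coprime a b"
  shows "residue (cot_kernel a b) 1 + (\<Sum>z \<in> {z. z^a = 1} - {1}. residue (cot_kernel a b) z)
         + (\<Sum>z \<in> {z. z^b = 1} - {1}. residue (cot_kernel a b) z) = 0"
proof -
  define Ua where "Ua = {z::complex. z^a = 1} - {1}"
  define Ub where "Ub = {z::complex. z^b = 1} - {1}"
  have fin: "finite Ua" "finite Ub"
    unfolding Ua_def Ub_def using assms(1,2) by (auto intro: finite_roots_unity odd_pos)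
  have disj: "Ua \<inter> Ub = {}"
    unfolding Ua_def Ub_def using root_of_unity_coprime_eq_1 assms(3) by blast
  have "-1 \<notin> Ua \<union> Ub" unfolding Ua_def Ub_def using assms(1,2) by auto
  moreover have "{z. z^a = 1} \<union> {z. z^b = 1} \<union> {-1} = insert 1 (insert (-1) (Ua \<union> Ub))"
    unfolding Ua_def Ub_def by auto
  ultimately have "(\<Sum>z \<in> {z. z^a = 1} \<union> {z. z^b = 1} \<union> {-1}. residue (cot_kernel a b) z)
      = residue (cot_kernel a b) 1 + residue (cot_kernel a b) (-1)
        + (\<Sum>z \<in> Ua. residue (cot_kernel a b) z) + (\<Sum>z \<in> Ub. residue (cot_kernel a b) z)"
    using fin disj by (simp add: sum.union_disjoint Ua_def Ub_def add.assoc)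
  then show ?thesis
    using sum_residues_cot_kernel residue_cot_kernel_minus_one assms
    by (simp add: Ua_def Ub_def odd_pos Suc_leI)
qed

theorem mainTheorem17:
  fixes p q :: nat
  assumes "p \<ge> 3" "q \<ge> 3" "odd p" "odd q" "coprime p q"
  shows "real p * (\<Sum>n=1..q-1. cot (pi * n * p / q) * cot (pi * n / q) / (cos (pi * n / q))\<^sup>2)
       + real q * (\<Sum>n=1..p-1. cot (pi * n * q / p) * cot (pi * n / p) / (cos (pi * n / p))\<^sup>2)
       = (real p ^ 2 + real q ^ 2 - 2) / 3"
proof -
  define SQ where "SQ = (\<Sum>n=1..q-1. cot (pi * n * p / q) * cot (pi * n / q) / (cos (pi * n / q))\<^sup>2)"
  define SP where "SP = (\<Sum>n=1..p-1. cot (pi * n * q / p) * cot (pi * n / p) / (cos (pi * n / p))\<^sup>2)"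
  have "coprime q p" using assms(5) by (simp add: coprime_commute)
  have "complex_of_real ((real p^2 + real q^2 - 2) / (6 * p * q) - SP / (2 * p) - SQ / (2 * q)) = 0"
    using sum_residues_cot_kernel_split[OF assms(3-5)]
      residue_cot_kernel_one[of p q] sum_residues_cot_kernel_nontrivial_roots[OF assms(3-5)]
      sum_residues_cot_kernel_nontrivial_roots[OF assms(4,3) \<open>coprime q p\<close>] assms
    by (simp add: SP_def SQ_def cot_kernel_commute[of q p])
  then have "(real p^2 + real q^2 - 2) / (6 * p * q) - SP / (2 * p) - SQ / (2 * q) = 0"
    by (simp only: of_real_eq_0_iff)
  moreover have "6 * p * q * ((real p^2 + real q^2 - 2) / (6 * p * q) - SP / (2 * p) - SQ / (2 * q))
      = real p^2 + real q^2 - 2 - 3 * q * SP - 3 * p * SQ"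
    using assms(1,2) by (simp add: field_simps)
  ultimately show ?thesis unfolding SP_def[symmetric] SQ_def[symmetric] by simp
qed

end
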